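(* Let $L>0$, $N\in\mathbb{N}_+$, $h=L/N$, $\epsilon>0$, $\theta_0>0$, $\tau>0$, $\alpha\in(0,1)$, $\rho_u>0$, $\rho_w>0$, and let $u^n\in\mathcal{C}_{per}$ with $-1<u^n<1$ pointwise. Let $\{(u_1^{(k)},w_1^{(k)},u_2^{(k)},w_2^{(k)},u_3^{(k)},w_3^{(k)})\}_{k\ge0}$ be the sequence generated by Algorithm 1 (described in the context), and let $(u_1^*,w_1^*,u_2^*,w_2^*,u_3^*,w_3^* )$ be the stationary point of the Lagrange function $\mathcal{L}$ (described in the context). Then, as $k\to\infty$, $$\|u_i^{(k)}-u_i^*\|_2\to0\quad\text{and}\quad\|w_i^{(k)}-w_i^*\|_2\to0\qquad(i=1,2,3).$$
   Context: $\mathcal{C}_{per}$ is the space of real grid functions $\nu=(\nu_{i,j,k})_{i,j,k\in\mathbb{Z}}$ that are $N$-periodic in each index (values at cell centres of a uniform grid of mesh size $h$ on $(0,L)^3$). Inner product $\langle\nu,\xi\rangle=h^2\sum_{i,j,k=1}^N\nu_{i,j,k}\xi_{i,j,k}$, $\|\nu\|_2=\langle\nu,\nu\rangle^{1/2}$. Discrete Laplacian $(\Delta_h\nu)_{i,j,k}=h^{-2}(\nu_{i+1,j,k}+\nu_{i-1,j,k}+\nu_{i,j+1,k}+\nu_{i,j-1,k}+\nu_{i,j,k+1}+\nu_{i,j,k-1}-6\nu_{i,j,k})$; $\|\nabla_h\nu\|_2^2=\sum_{i,j,k=1}^N\big[(\nu_{i+1,j,k}-\nu_{i,j,k})^2+(\nu_{i,j+1,k}-\nu_{i,j,k})^2+(\nu_{i,j,k+1}-\nu_{i,j,k})^2\big]$.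 Operations and inequalities are pointwise; $1$ is the constant grid function. Lagrange function: $\mathcal{L}(u_1,w_1,u_2,w_2,u_3,w_3)=Z_1(u_1,w_1)+Z_2(u_2,w_2)+\langle u_3,u_1-u_2\rangle-\langle w_3,w_1-w_2\rangle$, with $Z_1(u,w)=\frac{\epsilon^2}{2}\|\nabla_hu\|_2^2-\alpha\langle u-u^n,w\rangle-\frac{\tau}{2}\|\nabla_hw\|_2^2$ and $Z_2(u,w)=\langle1+u,\log(1+u)\rangle+\langle1-u,\log(1-u)\rangle-\theta_0\langle u^n,u\rangle-(1-\alpha)\langle u-u^n,w\rangle$ (for $-1<u<1$). A stationary point is a tuple in $\mathcal{C}_{per}^6$ with $-1<u_2^*<1$ satisfying $-\epsilon^2\Delta_hu_1^*-\alpha w_1^*+u_3^*=0$, $\alpha(-u_1^*+u^n)+\tau\Delta_hw_1^*-w_3^*=0$, $\log(1+u_2^* )-\log(1-u_2^* )-\theta_0u^n-(1-\alpha)w_2^*-u_3^*=0$, $(1-\alpha)(-u_2^*+u^n)+w_3^*=0$, $u_1^*=u_2^*$, $w_1^*=w_2^*$. Algorithm 1: set $u_2^{(0)}=u^n$, $w_2^{(0)}=0$, $u_3^{(0)}=0$, $w_3^{(0)}=0$. For $k=0,1,2,\dots$: (i) find $u_1^{(k+1)},w_1^{(k+1)}\in\mathcal{C}_{per}$ solving $-\epsilon^2\Delta_hu_1^{(k+1)}-\alpha w_1^{(k+1)}+u_3^{(k)}+\rho_u(u_1^{(k+1)}-u_2^{(k)})=0$ and $\alpha(-u_1^{(k+1)}+u^n)+\tau\Delta_hw_1^{(k+1)}-w_3^{(k)}-\rho_w(w_1^{(k+1)}-w_2^{(k)})=0$;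 (ii) find $u_2^{(k+1)},w_2^{(k+1)}\in\mathcal{C}_{per}$ with $-1<u_2^{(k+1)}<1$ solving $\log(1+u_2^{(k+1)})-\log(1-u_2^{(k+1)})-\theta_0u^n-(1-\alpha)w_2^{(k+1)}-u_3^{(k)}-\rho_u(u_1^{(k+1)}-u_2^{(k+1)})=0$ and $(1-\alpha)(-u_2^{(k+1)}+u^n)+w_3^{(k)}+\rho_w(w_1^{(k+1)}-w_2^{(k+1)})=0$; (iii) set $u_3^{(k+1)}=u_3^{(k)}+\rho_u(u_1^{(k+1)}-u_2^{(k+1)})$, $w_3^{(k+1)}=w_3^{(k)}+\rho_w(w_1^{(k+1)}-w_2^{(k+1)})$. *)

theory Defs
  imports Complex_Main
begin

type_synonym grid = "int \<Rightarrow> int \<Rightarrow> int \<Rightarrow> real"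

definition per :: "nat \<Rightarrow> grid \<Rightarrow> bool" where
  "per N v \<longleftrightarrow> (\<forall>i j k. v (i + int N) j k = v i j k \<and> v i (j + int N) k = v i j k
                        \<and> v i j (k + int N) = v i j k)"

definition gip :: "real \<Rightarrow> nat \<Rightarrow> grid \<Rightarrow> grid \<Rightarrow> real" where
  "gip h N v x = h^2 * (\<Sum>i\<in>{1..int N}. \<Sum>j\<in>{1..int N}. \<Sum>k\<in>{1..int N}. v i j k * x i j k)"

definition gnorm :: "real \<Rightarrow> nat \<Rightarrow> grid \<Rightarrow> real" where
  "gnorm h N v = sqrt (gip h N v v)"

definition lap :: "real \<Rightarrow> grid \<Rightarrow> grid" where
  "lap h v = (\<lambda>i j k. (v (i+1) j k + v (i-1) j k + v i (j+1) k + v i (j-1) k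
                       + v i j (k+1) + v i j (k-1) - 6 * v i j k) / h^2)"

definition stationary ::
  "nat \<Rightarrow> real \<Rightarrow> real \<Rightarrow> real \<Rightarrow> real \<Rightarrow> real \<Rightarrow> grid \<Rightarrow>
   grid \<Rightarrow> grid \<Rightarrow> grid \<Rightarrow> grid \<Rightarrow> grid \<Rightarrow> grid \<Rightarrow> bool" where
  "stationary N h eps \<theta>0 \<tau> \<alpha> un u1 w1 u2 w2 u3 w3 \<longleftrightarrow>
     per N u1 \<and> per N w1 \<and> per N u2 \<and> per N w2 \<and> per N u3 \<and> per N w3 \<and>
     (\<forall>a b c. -1 < u2 a b c \<and> u2 a b c < 1) \<and>
     (\<forall>a b c. - (eps^2) * lap h u1 a b c - \<alpha> * w1 a b c + u3 a b c = 0) \<and>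
     (\<forall>a b c. \<alpha> * (- u1 a b c + un a b c) + \<tau> * lap h w1 a b c - w3 a b c = 0) \<and>
     (\<forall>a b c. ln (1 + u2 a b c) - ln (1 - u2 a b c) - \<theta>0 * un a b c
               - (1 - \<alpha>) * w2 a b c - u3 a b c = 0) \<and>
     (\<forall>a b c. (1 - \<alpha>) * (- u2 a b c + un a b c) + w3 a b c = 0) \<and>
     u1 = u2 \<and> w1 = w2"

definition algorithm1 ::
  "nat \<Rightarrow> real \<Rightarrow> real \<Rightarrow> real \<Rightarrow> real \<Rightarrow> real \<Rightarrow> real \<Rightarrow> real \<Rightarrow> grid \<Rightarrow>
   (nat \<Rightarrow> grid) \<Rightarrow> (nat \<Rightarrow> grid) \<Rightarrow> (nat \<Rightarrow> grid) \<Rightarrow> (nat \<Rightarrow> grid) \<Rightarrow>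
   (nat \<Rightarrow> grid) \<Rightarrow> (nat \<Rightarrow> grid) \<Rightarrow> bool" where
  "algorithm1 N h eps \<theta>0 \<tau> \<alpha> \<rho>u \<rho>w un u1 w1 u2 w2 u3 w3 \<longleftrightarrow>
     u2 0 = un \<and> w2 0 = (\<lambda>a b c. 0) \<and> u3 0 = (\<lambda>a b c. 0) \<and> w3 0 = (\<lambda>a b c. 0) \<and>
     (\<forall>k. per N (u1 (Suc k)) \<and> per N (w1 (Suc k)) \<and>
          (\<forall>a b c. - (eps^2) * lap h (u1 (Suc k)) a b c - \<alpha> * w1 (Suc k) a b c + u3 k a b c
                    + \<rho>u * (u1 (Suc k) a b c - u2 k a b c) = 0) \<and>
          (\<forall>a b c. \<alpha> * (- u1 (Suc k) a b c + un a b c) + \<tau> * lap h (w1 (Suc k)) a b c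
                    - w3 k a b c - \<rho>w * (w1 (Suc k) a b c - w2 k a b c) = 0) \<and>
          per N (u2 (Suc k)) \<and> per N (w2 (Suc k)) \<and>
          (\<forall>a b c. -1 < u2 (Suc k) a b c \<and> u2 (Suc k) a b c < 1) \<and>
          (\<forall>a b c. ln (1 + u2 (Suc k) a b c) - ln (1 - u2 (Suc k) a b c) - \<theta>0 * un a b c
                    - (1 - \<alpha>) * w2 (Suc k) a b c - u3 k a b c
                    - \<rho>u * (u1 (Suc k) a b c - u2 (Suc k) a b c) = 0) \<and>
          (\<forall>a b c. (1 - \<alpha>) * (- u2 (Suc k) a b c + un a b c) + w3 k a b c
                    + \<rho>w * (w1 (Suc k) a b c - w2 (Suc k) a b c) = 0) \<and>
          u3 (Suc k) = (\<lambda>a b c. u3 k a b c + \<rho>u * (u1 (Suc k) a b c - u2 (Suc k) a b c)) \<and>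
          w3 (Suc k) = (\<lambda>a b c. w3 k a b c + \<rho>w * (w1 (Suc k) a b c - w2 (Suc k) a b c)))"

end

theory Submission
  imports Defs
begin

(* Errors to the stationary point satisfy the same equations as Algorithm 1 with u^n removed.
   For them, E = rho_u |e_u2|^2 + rho_w |e_w2|^2 + |e_u3|^2/rho_u + |e_w3|^2/rho_w is a Lyapunov
   function: one step lowers E by at least 2|e_u2|^2 + rho_u |e_u1 - e_u2|^2 + rho_w |e_w1 - e_w2|^2.
   The alpha-coupling terms cancel, the periodic Laplacian is negative semidefinite (summation by
   parts), and log(1+u) - log(1-u) is strongly monotone. Hence these dissipated quantities tend to
   zero. The u1-equation plus the u2-equation then forces alpha e_w1 + (1 - alpha) e_w2 to zero,
   and the multiplier errors follow from the u2- and w2-equations. *)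

lemma periodic_sum_shift:
  fixes f :: "int \<Rightarrow> 'a::comm_monoid_add"
  assumes "\<And>i. f (i + int N) = f i"
  shows "(\<Sum>i\<in>{1..int N}. f (i + 1)) = (\<Sum>i\<in>{1..int N}. f i)"
proof (cases "N = 0")
  case False
  have "(\<Sum>i\<in>{1..int N}. f (i + 1)) = (\<Sum>i\<in>{2..int N + 1}. f i)"
    by (rule sum.reindex_bij_witness[where i="\<lambda>i. i - 1" and j="\<lambda>i. i + 1"]) auto
  also have "\<dots> = f (int N + 1) + (\<Sum>i\<in>{2..int N}. f i)"
    using False by (simp add: atLeastAtMostPlus1_int_conv add.commute)
  also have "f (int N + 1) = f 1"
    using assms[of 1] by (simp add: add.commute)
  also have "f 1 + (\<Sum>i\<in>{2..int N}. f i) = (\<Sum>i\<in>{1..int N}. f i)"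
  proof -
    have "{1..int N} = insert 1 {2..int N}" using False by auto
    then show ?thesis by simp
  qed
  finally show ?thesis .
qed simp

lemma periodic_sum_second_difference:
  fixes f :: "int \<Rightarrow> real"
  assumes "\<And>i. f (i + int N) = f i"
  shows "(\<Sum>i\<in>{1..int N}. (f (i + 1) + f (i - 1) - 2 * f i) * f i)
       = - (\<Sum>i\<in>{1..int N}. (f (i + 1) - f i)\<^sup>2)"
proof -
  have squares: "(\<Sum>i\<in>{1..int N}. (f (i + 1))\<^sup>2) = (\<Sum>i\<in>{1..int N}. (f i)\<^sup>2)"
    using periodic_sum_shift[of "\<lambda>i. (f i)\<^sup>2"] assms by simp
  have "f (i + int N - 1) = f (i - 1)" for i
    using assms[of "i - 1"] by (simp add: algebra_simps)
  then have products: "(\<Sum>i\<in>{1..int N}. f i * f (i + 1)) = (\<Sum>i\<in>{1..int N}. f (i - 1) * f i)"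
    using periodic_sum_shift[of "\<lambda>i. f (i - 1) * f i"] assms by (simp add: algebra_simps)
  have "(\<Sum>i\<in>{1..int N}. (f (i + 1) + f (i - 1) - 2 * f i) * f i)
      = (\<Sum>i\<in>{1..int N}. f i * f (i + 1)) + (\<Sum>i\<in>{1..int N}. f (i - 1) * f i)
        - 2 * (\<Sum>i\<in>{1..int N}. (f i)\<^sup>2)"
    by (simp add: algebra_simps power2_eq_square sum.distrib sum_subtractf sum_distrib_left)
  moreover have "(\<Sum>i\<in>{1..int N}. (f (i + 1) - f i)\<^sup>2)
      = (\<Sum>i\<in>{1..int N}. (f (i + 1))\<^sup>2) + (\<Sum>i\<in>{1..int N}. (f i)\<^sup>2)
        - 2 * (\<Sum>i\<in>{1..int N}. f i * f (i + 1))"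
    by (simp add: algebra_simps power2_eq_square sum.distrib sum_subtractf sum_distrib_left)
  ultimately show ?thesis
    using squares products by linarith
qed

lemma periodic_sum_second_difference_nonpos:
  fixes f :: "int \<Rightarrow> real"
  assumes "\<And>i. f (i + int N) = f i"
  shows "(\<Sum>i\<in>{1..int N}. (f (i + 1) + f (i - 1) - 2 * f i) * f i) \<le> 0"
  using periodic_sum_second_difference[of f N] assms by (simp add: sum_nonneg)

definition grid_sum :: "nat \<Rightarrow> grid \<Rightarrow> real" where
  "grid_sum N v = (\<Sum>i\<in>{1..int N}. \<Sum>j\<in>{1..int N}. \<Sum>k\<in>{1..int N}. v i j k)"

lemma grid_sum_nonneg: "(\<And>i j k. 0 \<le> v i j k) \<Longrightarrow> 0 \<le> grid_sum N v"
  by (simp add: grid_sum_def sum_nonneg)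

lemma grid_sum_lap_mult_nonpos:
  assumes "per N v"
  shows "grid_sum N (\<lambda>i j k. lap h v i j k * v i j k) \<le> 0"
proof -
  let ?I = "{1..int N}"
  define Dx where "Dx i j k = (v (i + 1) j k + v (i - 1) j k - 2 * v i j k) * v i j k" for i j k
  define Dy where "Dy i j k = (v i (j + 1) k + v i (j - 1) k - 2 * v i j k) * v i j k" for i j k
  define Dz where "Dz i j k = (v i j (k + 1) + v i j (k - 1) - 2 * v i j k) * v i j k" for i j k
  have "v (i + int N) j k = v i j k" "v i (j + int N) k = v i j k" "v i j (k + int N) = v i j k"
    for i j k
    using assms by (simp_all add: per_def)
  then have line_sums: "(\<Sum>i\<in>?I. Dx i j k) \<le> 0" "(\<Sum>j\<in>?I. Dy i j k) \<le> 0"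
    "(\<Sum>k\<in>?I. Dz i j k) \<le> 0" for i j k
    unfolding Dx_def Dy_def Dz_def
    using periodic_sum_second_difference_nonpos[of "\<lambda>i. v i j k" N]
      periodic_sum_second_difference_nonpos[of "\<lambda>j. v i j k" N]
      periodic_sum_second_difference_nonpos[of "\<lambda>k. v i j k" N]
    by simp_all
  have "(\<Sum>i\<in>?I. \<Sum>j\<in>?I. \<Sum>k\<in>?I. Dx i j k) = (\<Sum>j\<in>?I. \<Sum>k\<in>?I. \<Sum>i\<in>?I. Dx i j k)"
    by (subst sum.swap) (rule sum.cong[OF refl], rule sum.swap)
  moreover have "(\<Sum>i\<in>?I. \<Sum>j\<in>?I. \<Sum>k\<in>?I. Dy i j k) = (\<Sum>i\<in>?I. \<Sum>k\<in>?I. \<Sum>j\<in>?I. Dy i j k)"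
    by (rule sum.cong[OF refl], rule sum.swap)
  ultimately have "grid_sum N Dx \<le> 0" "grid_sum N Dy \<le> 0" "grid_sum N Dz \<le> 0"
    unfolding grid_sum_def by (simp_all add: sum_nonpos line_sums)
  moreover have "lap h v i j k * v i j k = (Dx i j k + Dy i j k + Dz i j k) / h\<^sup>2" for i j k
    unfolding Dx_def Dy_def Dz_def by (simp add: lap_def field_simps)
  then have "grid_sum N (\<lambda>i j k. lap h v i j k * v i j k)
      = (grid_sum N Dx + grid_sum N Dy + grid_sum N Dz) / h\<^sup>2"
    by (simp add: grid_sum_def sum.distrib add_divide_distrib flip: sum_divide_distrib)
  ultimately show ?thesis
    by (simp add: divide_nonpos_nonneg)
qed

lemma periodic_mod_representative:
  fixes f :: "int \<Rightarrow> 'a"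
  assumes "\<And>i. f (i + int N) = f i"
  shows "f i = f ((i - 1) mod int N + 1)"
proof -
  have shift_multiple: "f (r + int N * t) = f r" for r t
  proof (induction t rule: int_induct[where k=0])
    case (step1 t)
    then show ?case
      using assms[of "r + int N * t"] by (simp add: algebra_simps)
  next
    case (step2 t)
    then show ?case
      using assms[of "r + int N * (t - 1)"] by (simp add: algebra_simps)
  qed simp
  have "i = ((i - 1) mod int N + 1) + int N * ((i - 1) div int N)"
    by (simp add: algebra_simps)
  then show ?thesis
    by (metis shift_multiple)
qed

lemma per_le_grid_sum:
  assumes "per N v" "N > 0" "\<And>i j k. 0 \<le> v i j k"
  shows "v a b c \<le> grid_sum N v"
proof -
  let ?I = "{1..int N}"
  define rep where "rep x = (x - 1) mod int N + 1" for x
  have rep_in: "rep x \<in> ?I" for x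
    using \<open>N > 0\<close> by (simp add: rep_def pos_mod_bound add1_zle_eq)
  have "v x y z = v (rep x) y z" "v x y z = v x (rep y) z" "v x y z = v x y (rep z)" for x y z
    using \<open>per N v\<close> periodic_mod_representative[of "\<lambda>i. v i y z" N x]
      periodic_mod_representative[of "\<lambda>j. v x j z" N y]
      periodic_mod_representative[of "\<lambda>k. v x y k" N z]
    by (simp_all add: per_def rep_def)
  then have "v a b c = v (rep a) (rep b) (rep c)" by metis
  also have "\<dots> \<le> (\<Sum>k\<in>?I. v (rep a) (rep b) k)"
    by (rule member_le_sum) (use rep_in assms(3) in auto)
  also have "\<dots> \<le> (\<Sum>j\<in>?I. \<Sum>k\<in>?I. v (rep a) j k)"
    by (rule member_le_sum[of _ _ "\<lambda>j. \<Sum>k\<in>?I. v (rep a) j k"])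
      (use rep_in assms(3) in \<open>auto intro: sum_nonneg\<close>)
  also have "\<dots> \<le> grid_sum N v"
    unfolding grid_sum_def
    by (rule member_le_sum[of _ _ "\<lambda>i. \<Sum>j\<in>?I. \<Sum>k\<in>?I. v i j k"])
      (use rep_in assms(3) in \<open>auto intro!: sum_nonneg\<close>)
  finally show ?thesis .
qed

lemma gnorm_tendsto_zero:
  assumes "\<And>a b c. (\<lambda>n. X n a b c) \<longlonglongrightarrow> 0"
  shows "(\<lambda>n. gnorm h N (X n)) \<longlonglongrightarrow> 0"
proof -
  have "(\<lambda>n. gip h N (X n) (X n)) \<longlonglongrightarrow> h\<^sup>2 * 0"
    unfolding gip_def
    by (intro tendsto_mult tendsto_const tendsto_null_sum tendsto_mult_zero assms)
  then show ?thesis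
    unfolding gnorm_def using tendsto_real_sqrt by fastforce
qed

definition log_ratio :: "real \<Rightarrow> real" where
  "log_ratio x = ln (1 + x) - ln (1 - x)"

lemma ln_diff_ge:
  fixes a b :: real
  shows "0 < a \<Longrightarrow> 0 < b \<Longrightarrow> (a - b) / a \<le> ln a - ln b"
  using ln_le_minus_one[of "b / a"] by (simp add: ln_div diff_divide_distrib)

lemma log_ratio_strongly_monotone:
  assumes "\<bar>x\<bar> < 1" "\<bar>y\<bar> < 1"
  shows "(x - y)\<^sup>2 \<le> (log_ratio x - log_ratio y) * (x - y)"
proof -
  have ordered: "(x - y)\<^sup>2 \<le> (log_ratio x - log_ratio y) * (x - y)"
    if "\<bar>x\<bar> < 1" "\<bar>y\<bar> < 1" "y \<le> x" for x y :: real
  proof -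
    have "(x - y) / 2 \<le> (x - y) / (1 + x)" "(x - y) / 2 \<le> (x - y) / (1 - y)"
      using that by (intro divide_left_mono; simp)+
    moreover have "(x - y) / (1 + x) \<le> ln (1 + x) - ln (1 + y)"
      "(x - y) / (1 - y) \<le> ln (1 - y) - ln (1 - x)"
      using that ln_diff_ge[of "1 + x" "1 + y"] ln_diff_ge[of "1 - y" "1 - x"] by auto
    moreover have "(x - y) / 2 + (x - y) / 2 = x - y"
      by simp
    ultimately have "x - y \<le> log_ratio x - log_ratio y"
      unfolding log_ratio_def by linarith
    then show ?thesis
      using that by (simp add: power2_eq_square mult_right_mono)
  qed
  show ?thesis
    using ordered[OF assms] ordered[OF assms(2,1)]
    by (cases "y \<le> x") (auto simp: power2_commute algebra_simps)
qed

lemma summable_of_nonneg_descent: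
  fixes V D :: "nat \<Rightarrow> real"
  assumes "\<And>n. 0 \<le> V n" "\<And>n. 0 \<le> D n" "\<And>n. V (Suc n) + D n \<le> V n"
  shows "summable D"
proof (rule summableI_nonneg_bounded)
  have partial_sums: "(\<Sum>k<n. D k) \<le> V 0 - V n" for n
  proof (induction n)
    case (Suc n)
    then show ?case
      using assms(3)[of n] by simp
  qed simp
  show "(\<Sum>k<n. D k) \<le> V 0" for n
    using partial_sums[of n] assms(1)[of n] by linarith
qed (fact assms(2))

lemma tendsto_zero_of_sq_le:
  fixes f W :: "nat \<Rightarrow> real"
  assumes "W \<longlonglongrightarrow> 0" "c > 0" "\<And>n. c * (f n)\<^sup>2 \<le> W n"
  shows "f \<longlonglongrightarrow> 0"
proof -
  have lim: "(\<lambda>n. sqrt (W n / c)) \<longlonglongrightarrow> 0"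
    using tendsto_real_sqrt[OF tendsto_divide_zero[OF assms(1)]] by simp
  have bound: "\<bar>f n\<bar> \<le> sqrt (W n / c)" for n
  proof -
    have "(f n)\<^sup>2 \<le> W n / c"
      using assms(2) assms(3)[of n] by (simp add: field_simps)
    then have "sqrt ((f n)\<^sup>2) \<le> sqrt (W n / c)"
      by (rule real_sqrt_le_mono)
    then show ?thesis
      by simp
  qed
  have "(\<lambda>n. \<bar>f n\<bar>) \<longlonglongrightarrow> 0"
    by (rule real_tendsto_sandwich[OF _ _ tendsto_const lim]) (simp_all add: bound)
  then show ?thesis
    by (simp add: tendsto_rabs_zero_iff)
qed

(* One step of the splitting scheme written for errors: e1 f1 e2 f2 are the new errors of u1 w1 u2 w2,
   e2o f2o p q the old errors of u2 w2 u3 w3, p' q' the new multiplier errors; A and B stand for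
   -eps^2 lap e1 and -tau lap f1, and g, go for the new and old errors of log_ratio u2. *)
lemma splitting_step_energy_identity:
  fixes \<alpha> \<rho>u \<rho>w :: real
  assumes "\<rho>u \<noteq> 0" "\<rho>w \<noteq> 0"
    and "A - \<alpha> * f1 + p + \<rho>u * (e1 - e2o) = 0"
    and "- \<alpha> * e1 - B - q - \<rho>w * (f1 - f2o) = 0"
    and "g - (1 - \<alpha>) * f2 - p - \<rho>u * (e1 - e2) = 0"
    and "- (1 - \<alpha>) * e2 + q + \<rho>w * (f1 - f2) = 0"
    and p': "p' = p + \<rho>u * (e1 - e2)" and q': "q' = q + \<rho>w * (f1 - f2)"
    and "go - (1 - \<alpha>) * f2o - p = 0" and q: "q = (1 - \<alpha>) * e2o"
  shows "\<rho>u * e2\<^sup>2 + \<rho>w * f2\<^sup>2 + p'\<^sup>2 / \<rho>u + q'\<^sup>2 / \<rho>w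
      + \<rho>u * (e1 - e2)\<^sup>2 + \<rho>w * (f1 - f2)\<^sup>2 + 2 * A * e1 + 2 * B * f1 + 2 * g * e2
      + 2 * (e2 - e2o) * (g - go) + \<rho>u * (e2 - e2o)\<^sup>2 + \<rho>w * (f2 - f2o)\<^sup>2
    = \<rho>u * e2o\<^sup>2 + \<rho>w * f2o\<^sup>2 + p\<^sup>2 / \<rho>u + q\<^sup>2 / \<rho>w"
proof -
  have A: "A = \<alpha> * f1 - p - \<rho>u * (e1 - e2o)" and B: "B = - \<alpha> * e1 - q - \<rho>w * (f1 - f2o)"
    and g: "g = (1 - \<alpha>) * f2 + p + \<rho>u * (e1 - e2)" and go: "go = (1 - \<alpha>) * f2o + p"
    using assms by (simp_all add: algebra_simps)
  have f2: "f2 = f1 - (1 - \<alpha>) * (e2 - e2o) / \<rho>w"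
    using assms by (simp add: field_simps)
  show ?thesis
    unfolding A B g go p' q' q f2 using assms(1,2)
    by (simp add: field_simps power2_eq_square)
qed

lemma lap_diff: "lap h (\<lambda>a b c. v a b c - w a b c) a b c = lap h v a b c - lap h w a b c"
  unfolding lap_def by (simp add: diff_divide_distrib[symmetric])

locale algorithm1_run =
  fixes N :: nat and h eps \<theta>0 \<tau> \<alpha> \<rho>u \<rho>w :: real and un :: grid
    and u1 w1 u2 w2 u3 w3 :: "nat \<Rightarrow> grid"
    and u1s w1s u2s w2s u3s w3s :: grid
  assumes N_pos: "N > 0" and tau_nonneg: "0 \<le> \<tau>" and rho_u_pos: "0 < \<rho>u" and rho_w_pos: "0 < \<rho>w"
    and algorithm1: "algorithm1 N h eps \<theta>0 \<tau> \<alpha> \<rho>u \<rho>w un u1 w1 u2 w2 u3 w3"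
    and stationary: "stationary N h eps \<theta>0 \<tau> \<alpha> un u1s w1s u2s w2s u3s w3s"
begin

lemma iterate_properties:
  shows per_u1: "per N (u1 (Suc k))" and per_w1: "per N (w1 (Suc k))"
    and per_u2: "per N (u2 (Suc k))" and per_w2: "per N (w2 (Suc k))"
    and u2_bounded: "\<bar>u2 (Suc k) a b c\<bar> < 1"
    and u1_update: "- (eps^2) * lap h (u1 (Suc k)) a b c - \<alpha> * w1 (Suc k) a b c + u3 k a b c
                    + \<rho>u * (u1 (Suc k) a b c - u2 k a b c) = 0"
    and w1_update: "\<alpha> * (- u1 (Suc k) a b c + un a b c) + \<tau> * lap h (w1 (Suc k)) a b c
                    - w3 k a b c - \<rho>w * (w1 (Suc k) a b c - w2 k a b c) = 0"
    and u2_update: "ln (1 + u2 (Suc k) a b c) - ln (1 - u2 (Suc k) a b c) - \<theta>0 * un a b c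
                    - (1 - \<alpha>) * w2 (Suc k) a b c - u3 k a b c
                    - \<rho>u * (u1 (Suc k) a b c - u2 (Suc k) a b c) = 0"
    and w2_update: "(1 - \<alpha>) * (- u2 (Suc k) a b c + un a b c) + w3 k a b c
                    + \<rho>w * (w1 (Suc k) a b c - w2 (Suc k) a b c) = 0"
    and u3_update: "u3 (Suc k) a b c = u3 k a b c + \<rho>u * (u1 (Suc k) a b c - u2 (Suc k) a b c)"
    and w3_update: "w3 (Suc k) a b c = w3 k a b c + \<rho>w * (w1 (Suc k) a b c - w2 (Suc k) a b c)"
  using algorithm1 unfolding algorithm1_def abs_less_iff by (-, auto)

lemma stationary_properties:
  shows per_u1s: "per N u1s" and per_w1s: "per N w1s"
    and per_u2s: "per N u2s" and per_w2s: "per N w2s"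
    and u2s_bounded: "\<bar>u2s a b c\<bar> < 1"
    and u1s_eq: "- (eps^2) * lap h u1s a b c - \<alpha> * w1s a b c + u3s a b c = 0"
    and w1s_eq: "\<alpha> * (- u1s a b c + un a b c) + \<tau> * lap h w1s a b c - w3s a b c = 0"
    and u2s_eq: "ln (1 + u2s a b c) - ln (1 - u2s a b c) - \<theta>0 * un a b c
               - (1 - \<alpha>) * w2s a b c - u3s a b c = 0"
    and w2s_eq: "(1 - \<alpha>) * (- u2s a b c + un a b c) + w3s a b c = 0"
    and u1s_u2s: "u1s = u2s" and w1s_w2s: "w1s = w2s"
  using stationary unfolding stationary_def abs_less_iff by (-, auto)

definition eu1 :: "nat \<Rightarrow> grid" where "eu1 n = (\<lambda>a b c. u1 n a b c - u1s a b c)"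
definition ew1 :: "nat \<Rightarrow> grid" where "ew1 n = (\<lambda>a b c. w1 n a b c - w1s a b c)"
definition eu2 :: "nat \<Rightarrow> grid" where "eu2 n = (\<lambda>a b c. u2 n a b c - u2s a b c)"
definition ew2 :: "nat \<Rightarrow> grid" where "ew2 n = (\<lambda>a b c. w2 n a b c - w2s a b c)"
definition eu3 :: "nat \<Rightarrow> grid" where "eu3 n = (\<lambda>a b c. u3 n a b c - u3s a b c)"
definition ew3 :: "nat \<Rightarrow> grid" where "ew3 n = (\<lambda>a b c. w3 n a b c - w3s a b c)"
definition elog :: "nat \<Rightarrow> grid" where
  "elog n = (\<lambda>a b c. log_ratio (u2 n a b c) - log_ratio (u2s a b c))"

lemma error_equations:
  shows u1_error: "- eps\<^sup>2 * lap h (eu1 (Suc k)) a b c - \<alpha> * ew1 (Suc k) a b c + eu3 k a b c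
                    + \<rho>u * (eu1 (Suc k) a b c - eu2 k a b c) = 0"
    and w1_error: "- \<alpha> * eu1 (Suc k) a b c - (- \<tau> * lap h (ew1 (Suc k)) a b c) - ew3 k a b c
                    - \<rho>w * (ew1 (Suc k) a b c - ew2 k a b c) = 0"
    and u2_error: "elog (Suc k) a b c - (1 - \<alpha>) * ew2 (Suc k) a b c - eu3 k a b c
                    - \<rho>u * (eu1 (Suc k) a b c - eu2 (Suc k) a b c) = 0"
    and w2_error: "- (1 - \<alpha>) * eu2 (Suc k) a b c + ew3 k a b c
                    + \<rho>w * (ew1 (Suc k) a b c - ew2 (Suc k) a b c) = 0"
    and u3_error: "eu3 (Suc k) a b c = eu3 k a b c + \<rho>u * (eu1 (Suc k) a b c - eu2 (Suc k) a b c)"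
    and w3_error: "ew3 (Suc k) a b c = ew3 k a b c + \<rho>w * (ew1 (Suc k) a b c - ew2 (Suc k) a b c)"
proof -
  show "- eps\<^sup>2 * lap h (eu1 (Suc k)) a b c - \<alpha> * ew1 (Suc k) a b c + eu3 k a b c
                    + \<rho>u * (eu1 (Suc k) a b c - eu2 k a b c) = 0"
    using u1_update[of k a b c] u1s_eq[of a b c]
    unfolding eu1_def ew1_def eu2_def eu3_def by (simp add: lap_diff u1s_u2s algebra_simps)
  show "- \<alpha> * eu1 (Suc k) a b c - (- \<tau> * lap h (ew1 (Suc k)) a b c) - ew3 k a b c
                    - \<rho>w * (ew1 (Suc k) a b c - ew2 k a b c) = 0"
    using w1_update[of k a b c] w1s_eq[of a b c]
    unfolding eu1_def ew1_def ew2_def ew3_def by (simp add: lap_diff w1s_w2s algebra_simps)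
  show "elog (Suc k) a b c - (1 - \<alpha>) * ew2 (Suc k) a b c - eu3 k a b c
                    - \<rho>u * (eu1 (Suc k) a b c - eu2 (Suc k) a b c) = 0"
    using u2_update[of k a b c] u2s_eq[of a b c]
    unfolding elog_def log_ratio_def eu1_def ew2_def eu2_def eu3_def by (simp add: u1s_u2s algebra_simps)
  show "- (1 - \<alpha>) * eu2 (Suc k) a b c + ew3 k a b c
                    + \<rho>w * (ew1 (Suc k) a b c - ew2 (Suc k) a b c) = 0"
    using w2_update[of k a b c] w2s_eq[of a b c]
    unfolding eu2_def ew1_def ew2_def ew3_def by (simp add: w1s_w2s algebra_simps)
  show "eu3 (Suc k) a b c = eu3 k a b c + \<rho>u * (eu1 (Suc k) a b c - eu2 (Suc k) a b c)"
    using u3_update[of k a b c] unfolding eu1_def eu2_def eu3_def by (simp add: u1s_u2s)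
  show "ew3 (Suc k) a b c = ew3 k a b c + \<rho>w * (ew1 (Suc k) a b c - ew2 (Suc k) a b c)"
    using w3_update[of k a b c] unfolding ew1_def ew2_def ew3_def by (simp add: w1s_w2s)
qed

lemma multiplier_errors:
  shows eu3_Suc: "eu3 (Suc k) a b c = elog (Suc k) a b c - (1 - \<alpha>) * ew2 (Suc k) a b c"
    and ew3_Suc: "ew3 (Suc k) a b c = (1 - \<alpha>) * eu2 (Suc k) a b c"
  using error_equations[of k a b c] by (simp_all add: algebra_simps)

definition energy :: "nat \<Rightarrow> grid" where
  "energy n a b c = \<rho>u * (eu2 n a b c)\<^sup>2 + \<rho>w * (ew2 n a b c)\<^sup>2
     + (eu3 n a b c)\<^sup>2 / \<rho>u + (ew3 n a b c)\<^sup>2 / \<rho>w"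

definition dissipation :: "nat \<Rightarrow> grid" where
  "dissipation n a b c = 2 * (eu2 n a b c)\<^sup>2 + \<rho>u * (eu1 n a b c - eu2 n a b c)\<^sup>2
     + \<rho>w * (ew1 n a b c - ew2 n a b c)\<^sup>2"

definition monotonicity_gap :: "nat \<Rightarrow> grid" where
  "monotonicity_gap n a b c =
     2 * (elog (Suc n) a b c * eu2 (Suc n) a b c - (eu2 (Suc n) a b c)\<^sup>2)
     + 2 * ((eu2 (Suc n) a b c - eu2 n a b c) * (elog (Suc n) a b c - elog n a b c))
     + \<rho>u * (eu2 (Suc n) a b c - eu2 n a b c)\<^sup>2 + \<rho>w * (ew2 (Suc n) a b c - ew2 n a b c)\<^sup>2"

lemma energy_step:
  "energy (Suc k) a b c = energy (Suc (Suc k)) a b c + dissipation (Suc (Suc k)) a b c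
     - 2 * eps\<^sup>2 * (lap h (eu1 (Suc (Suc k))) a b c * eu1 (Suc (Suc k)) a b c)
     - 2 * \<tau> * (lap h (ew1 (Suc (Suc k))) a b c * ew1 (Suc (Suc k)) a b c)
     + monotonicity_gap (Suc k) a b c"
proof -
  have "elog (Suc k) a b c - (1 - \<alpha>) * ew2 (Suc k) a b c - eu3 (Suc k) a b c = 0"
    by (simp add: eu3_Suc)
  from splitting_step_energy_identity[OF _ _ u1_error[of "Suc k"] w1_error[of "Suc k"]
      u2_error[of "Suc k"] w2_error[of "Suc k"] u3_error[of "Suc k"] w3_error[of "Suc k"]
      this ew3_Suc[of k]]
  show ?thesis
    unfolding energy_def dissipation_def monotonicity_gap_def
    using rho_u_pos rho_w_pos by (simp add: algebra_simps)
qed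

lemma monotonicity_gap_nonneg: "0 \<le> monotonicity_gap (Suc k) a b c"
proof -
  have "(eu2 (Suc (Suc k)) a b c)\<^sup>2 \<le> elog (Suc (Suc k)) a b c * eu2 (Suc (Suc k)) a b c"
    using log_ratio_strongly_monotone[OF u2_bounded u2s_bounded, of "Suc k" a b c a b c]
    unfolding eu2_def elog_def by (simp add: mult.commute)
  moreover have "0 \<le> (eu2 (Suc (Suc k)) a b c - eu2 (Suc k) a b c)
      * (elog (Suc (Suc k)) a b c - elog (Suc k) a b c)"
    using log_ratio_strongly_monotone[OF u2_bounded u2_bounded, of "Suc k" a b c k a b c]
    unfolding eu2_def elog_def by (simp add: mult.commute order_trans[OF zero_le_power2])
  ultimately show ?thesis
    unfolding monotonicity_gap_def using rho_u_pos rho_w_pos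
    by (intro add_nonneg_nonneg) auto
qed

lemma energy_descent:
  "grid_sum N (energy (Suc (Suc k))) + grid_sum N (dissipation (Suc (Suc k)))
     \<le> grid_sum N (energy (Suc k))"
proof -
  let ?lap_u = "\<lambda>a b c. lap h (eu1 (Suc (Suc k))) a b c * eu1 (Suc (Suc k)) a b c"
  let ?lap_w = "\<lambda>a b c. lap h (ew1 (Suc (Suc k))) a b c * ew1 (Suc (Suc k)) a b c"
  have "per N (eu1 (Suc (Suc k)))" "per N (ew1 (Suc (Suc k)))"
    using per_u1 per_w1 per_u1s per_w1s by (simp_all add: per_def eu1_def ew1_def)
  then have "grid_sum N ?lap_u \<le> 0" "grid_sum N ?lap_w \<le> 0"
    by (simp_all add: grid_sum_lap_mult_nonpos)
  moreover have "0 \<le> grid_sum N (monotonicity_gap (Suc k))"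
    by (simp add: grid_sum_nonneg monotonicity_gap_nonneg)
  moreover have "grid_sum N (energy (Suc k))
      = grid_sum N (energy (Suc (Suc k))) + grid_sum N (dissipation (Suc (Suc k)))
        - 2 * eps\<^sup>2 * grid_sum N ?lap_u - 2 * \<tau> * grid_sum N ?lap_w
        + grid_sum N (monotonicity_gap (Suc k))"
    unfolding grid_sum_def energy_step[of k]
    by (simp add: sum.distrib sum_subtractf sum_distrib_left)
  ultimately show ?thesis
    using tau_nonneg by (smt (verit) mult_nonneg_nonpos zero_le_power2)
qed

lemma energy_nonneg: "0 \<le> grid_sum N (energy n)"
  unfolding energy_def using rho_u_pos rho_w_pos by (intro grid_sum_nonneg) simp

lemma dissipation_nonneg: "0 \<le> dissipation n a b c"
  unfolding dissipation_def using rho_u_pos rho_w_pos by simp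

lemma dissipation_tendsto_zero: "(\<lambda>n. dissipation n a b c) \<longlonglongrightarrow> 0"
proof -
  have "summable (\<lambda>k. grid_sum N (dissipation (Suc (Suc k))))"
    by (rule summable_of_nonneg_descent[where V = "\<lambda>k. grid_sum N (energy (Suc k))"])
      (simp_all add: energy_nonneg grid_sum_nonneg dissipation_nonneg energy_descent)
  then have sum_lim: "(\<lambda>k. grid_sum N (dissipation (Suc (Suc k)))) \<longlonglongrightarrow> 0"
    by (rule summable_LIMSEQ_zero)
  have "per N (dissipation (Suc (Suc k)))" for k
    using per_u1 per_w1 per_u2 per_w2 per_u1s per_w1s per_u2s per_w2s
    unfolding per_def dissipation_def eu1_def ew1_def eu2_def ew2_def by simp
  then have "dissipation (Suc (Suc k)) a b c \<le> grid_sum N (dissipation (Suc (Suc k)))" for k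
    using N_pos dissipation_nonneg by (simp add: per_le_grid_sum)
  then have "(\<lambda>k. dissipation (Suc (Suc k)) a b c) \<longlonglongrightarrow> 0"
    by (intro real_tendsto_sandwich[OF _ _ tendsto_const sum_lim]) (simp_all add: dissipation_nonneg)
  then have "(\<lambda>k. dissipation (Suc k) a b c) \<longlonglongrightarrow> 0"
    by (rule LIMSEQ_imp_Suc)
  then show ?thesis
    by (rule LIMSEQ_imp_Suc)
qed

lemma eu2_tendsto: "(\<lambda>n. eu2 n a b c) \<longlonglongrightarrow> 0"
  by (rule tendsto_zero_of_sq_le[OF dissipation_tendsto_zero[of a b c], of 2])
    (use rho_u_pos rho_w_pos in \<open>simp_all add: dissipation_def\<close>)

lemma u_residual_tendsto: "(\<lambda>n. eu1 n a b c - eu2 n a b c) \<longlonglongrightarrow> 0"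
  by (rule tendsto_zero_of_sq_le[OF dissipation_tendsto_zero[of a b c] rho_u_pos])
    (use rho_w_pos in \<open>simp add: dissipation_def\<close>)

lemma w_residual_tendsto: "(\<lambda>n. ew1 n a b c - ew2 n a b c) \<longlonglongrightarrow> 0"
  by (rule tendsto_zero_of_sq_le[OF dissipation_tendsto_zero[of a b c] rho_w_pos])
    (use rho_u_pos in \<open>simp add: dissipation_def\<close>)

lemma eu1_tendsto: "(\<lambda>n. eu1 n a b c) \<longlonglongrightarrow> 0"
  using tendsto_add[OF u_residual_tendsto[of a b c] eu2_tendsto[of a b c]] by simp

lemma lap_eu1_tendsto: "(\<lambda>n. lap h (eu1 n) a b c) \<longlonglongrightarrow> 0"
proof (cases "h = 0")
  case False
  then have "(\<lambda>n. lap h (eu1 n) a b c) \<longlonglongrightarrow> (0 + 0 + 0 + 0 + 0 + 0 - 6 * 0) / h\<^sup>2"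
    unfolding lap_def by (intro tendsto_intros eu1_tendsto) simp
  then show ?thesis
    by simp
qed (simp add: lap_def)

lemma elog_tendsto: "(\<lambda>n. elog n a b c) \<longlonglongrightarrow> 0"
proof -
  have "(\<lambda>n. u2 n a b c) \<longlonglongrightarrow> u2s a b c"
    using tendsto_add[OF eu2_tendsto[of a b c] tendsto_const[of "u2s a b c"]] by (simp add: eu2_def)
  then have "(\<lambda>n. log_ratio (u2 n a b c)) \<longlonglongrightarrow> log_ratio (u2s a b c)"
    unfolding log_ratio_def using u2s_bounded[of a b c] by (intro tendsto_intros) auto
  then show ?thesis
    unfolding elog_def by (rule LIM_zero)
qed

lemma ew_tendsto: "(\<lambda>n. ew1 n a b c) \<longlonglongrightarrow> 0" "(\<lambda>n. ew2 n a b c) \<longlonglongrightarrow> 0"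
proof -
  have "\<alpha> * ew1 (Suc k) a b c + (1 - \<alpha>) * ew2 (Suc k) a b c
      = - eps\<^sup>2 * lap h (eu1 (Suc k)) a b c + elog (Suc k) a b c
        + \<rho>u * (eu2 (Suc k) a b c - eu2 k a b c)" for k
    using u1_error[of k a b c] u2_error[of k a b c] by (simp add: algebra_simps)
  moreover have "(\<lambda>k. - eps\<^sup>2 * lap h (eu1 (Suc k)) a b c + elog (Suc k) a b c
      + \<rho>u * (eu2 (Suc k) a b c - eu2 k a b c)) \<longlonglongrightarrow> - eps\<^sup>2 * 0 + 0 + \<rho>u * (0 - 0)"
    by (intro tendsto_intros LIMSEQ_Suc lap_eu1_tendsto elog_tendsto eu2_tendsto)
  ultimately have combination: "(\<lambda>k. \<alpha> * ew1 (Suc k) a b c + (1 - \<alpha>) * ew2 (Suc k) a b c) \<longlonglongrightarrow> 0"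
    by simp
  have residual: "(\<lambda>k. ew1 (Suc k) a b c - ew2 (Suc k) a b c) \<longlonglongrightarrow> 0"
    by (rule LIMSEQ_Suc[OF w_residual_tendsto[of a b c]])
  have "(\<lambda>k. (\<alpha> * ew1 (Suc k) a b c + (1 - \<alpha>) * ew2 (Suc k) a b c)
      + (1 - \<alpha>) * (ew1 (Suc k) a b c - ew2 (Suc k) a b c)) \<longlonglongrightarrow> 0"
    using tendsto_add[OF combination tendsto_mult_right_zero[OF residual]] by simp
  then have "(\<lambda>k. ew1 (Suc k) a b c) \<longlonglongrightarrow> 0"
    by (simp add: algebra_simps)
  then show "(\<lambda>n. ew1 n a b c) \<longlonglongrightarrow> 0"
    by (rule LIMSEQ_imp_Suc)
  have "(\<lambda>k. (\<alpha> * ew1 (Suc k) a b c + (1 - \<alpha>) * ew2 (Suc k) a b c)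
      - \<alpha> * (ew1 (Suc k) a b c - ew2 (Suc k) a b c)) \<longlonglongrightarrow> 0"
    using tendsto_diff[OF combination tendsto_mult_right_zero[OF residual]] by simp
  then have "(\<lambda>k. ew2 (Suc k) a b c) \<longlonglongrightarrow> 0"
    by (simp add: algebra_simps)
  then show "(\<lambda>n. ew2 n a b c) \<longlonglongrightarrow> 0"
    by (rule LIMSEQ_imp_Suc)
qed

lemma eu3_tendsto: "(\<lambda>n. eu3 n a b c) \<longlonglongrightarrow> 0"
proof -
  have "(\<lambda>k. elog (Suc k) a b c - (1 - \<alpha>) * ew2 (Suc k) a b c) \<longlonglongrightarrow> 0 - (1 - \<alpha>) * 0"
    by (intro tendsto_intros LIMSEQ_Suc elog_tendsto ew_tendsto)
  then have "(\<lambda>k. eu3 (Suc k) a b c) \<longlonglongrightarrow> 0"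
    by (simp add: eu3_Suc)
  then show ?thesis
    by (rule LIMSEQ_imp_Suc)
qed

lemma ew3_tendsto: "(\<lambda>n. ew3 n a b c) \<longlonglongrightarrow> 0"
proof -
  have "(\<lambda>k. (1 - \<alpha>) * eu2 (Suc k) a b c) \<longlonglongrightarrow> (1 - \<alpha>) * 0"
    by (intro tendsto_intros LIMSEQ_Suc eu2_tendsto)
  then have "(\<lambda>k. ew3 (Suc k) a b c) \<longlonglongrightarrow> 0"
    by (simp add: ew3_Suc)
  then show ?thesis
    by (rule LIMSEQ_imp_Suc)
qed

lemma errors_tendsto_zero:
  "(\<lambda>n. gnorm h N (eu1 n)) \<longlonglongrightarrow> 0" "(\<lambda>n. gnorm h N (ew1 n)) \<longlonglongrightarrow> 0"
  "(\<lambda>n. gnorm h N (eu2 n)) \<longlonglongrightarrow> 0" "(\<lambda>n. gnorm h N (ew2 n)) \<longlonglongrightarrow> 0"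
  "(\<lambda>n. gnorm h N (eu3 n)) \<longlonglongrightarrow> 0" "(\<lambda>n. gnorm h N (ew3 n)) \<longlonglongrightarrow> 0"
  by (intro gnorm_tendsto_zero eu1_tendsto ew_tendsto eu2_tendsto eu3_tendsto ew3_tendsto)+

end

theorem proposition4p3:
  fixes L eps \<theta>0 \<tau> \<alpha> \<rho>u \<rho>w h :: real and N :: nat and un :: grid
    and u1 w1 u2 w2 u3 w3 :: "nat \<Rightarrow> grid"
    and u1s w1s u2s w2s u3s w3s :: grid
  assumes "L > 0" "N > 0" "h = L / real N" "eps > 0" "\<theta>0 > 0" "\<tau> > 0"
    "0 < \<alpha>" "\<alpha> < 1" "\<rho>u > 0" "\<rho>w > 0"
    "per N un" "\<forall>a b c. -1 < un a b c \<and> un a b c < 1"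
    "algorithm1 N h eps \<theta>0 \<tau> \<alpha> \<rho>u \<rho>w un u1 w1 u2 w2 u3 w3"
    "stationary N h eps \<theta>0 \<tau> \<alpha> un u1s w1s u2s w2s u3s w3s"
  shows "(\<lambda>k. gnorm h N (\<lambda>a b c. u1 k a b c - u1s a b c)) \<longlonglongrightarrow> 0 \<and>
     (\<lambda>k. gnorm h N (\<lambda>a b c. w1 k a b c - w1s a b c)) \<longlonglongrightarrow> 0 \<and>
     (\<lambda>k. gnorm h N (\<lambda>a b c. u2 k a b c - u2s a b c)) \<longlonglongrightarrow> 0 \<and>
     (\<lambda>k. gnorm h N (\<lambda>a b c. w2 k a b c - w2s a b c)) \<longlonglongrightarrow> 0 \<and>
     (\<lambda>k. gnorm h N (\<lambda>a b c. u3 k a b c - u3s a b c)) \<longlonglongrightarrow> 0 \<and>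
     (\<lambda>k. gnorm h N (\<lambda>a b c. w3 k a b c - w3s a b c)) \<longlonglongrightarrow> 0"
proof -
  interpret algorithm1_run N h eps \<theta>0 \<tau> \<alpha> \<rho>u \<rho>w un u1 w1 u2 w2 u3 w3 u1s w1s u2s w2s u3s w3s
    by unfold_locales (use assms in simp_all)
  show ?thesis
    using errors_tendsto_zero unfolding eu1_def ew1_def eu2_def ew2_def eu3_def ew3_def by blast
qed

end
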